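(* Let $X$ be a finite discrete space with at least two elements, $\Gamma$ a nonempty countable set, $\varphi:\Gamma\to\Gamma$ a map, and $d$ a compatible metric on $X^\Gamma$. For each $x=(x_\alpha)\in X^\Gamma$ choose $y^x=(y^x_\alpha)\in X^\Gamma$ such that $\{\alpha\in\Gamma:x_\alpha\neq y^x_\alpha\}$ is a finite set of non-quasi-periodic points of $\varphi$. Let $D\subseteq X^\Gamma$ and $u,v\in X^\Gamma$. Then: (1) $F^*_{uv}(t)=1$ for all $t>0$ iff $F^*_{y^uy^v}(t)=1$ for all $t>0$; (2) there is $t>0$ with $F_{xz}(t)=0$ for all distinct $x,z\in D$ iff there is $t>0$ with $F_{y^xy^z}(t)=0$ for all distinct $x,z\in D$; (3) there is $t>0$ with $F_{xz}(t)<1$ for all distinct $x,z\in D$ iff there is $t>0$ with $F_{y^xy^z}(t)<1$ for all distinct $x,z\in D$. In particular, for $i\in\{1,2\}$, $D$ is a distributional scrambled set of type $i$ iff $\{y^x:x\in D\}$ is a distributional scrambled set of type $i$.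
   Context: $X^\Gamma$ has the product topology; $\sigma_\varphi((x_\alpha)_{\alpha\in\Gamma})=(x_{\varphi(\alpha)})_{\alpha\in\Gamma}$. A point $\theta\in\Gamma$ is non-quasi-periodic if $\{\varphi^n(\theta):n\ge0\}$ is infinite. With $f=\sigma_\varphi$, $\xi(x,y,t,n)=\#\{i\in\{0,\dots,n-1\}:d(f^i(x),f^i(y))<t\}$, $F_{xy}(t)=\liminf_n\xi(x,y,t,n)/n$, $F^*_{xy}(t)=\limsup_n\xi(x,y,t,n)/n$. A pair $x,y$ is distributional scrambled of type 1 if there is $s>0$ with $F_{xy}(s)=0$ and $F^*_{xy}(s)=1$ for all $s>0$; of type 2 if there is $s>0$ with $F_{xy}(s)<1$ and $F^*_{xy}(s)=1$ for all $s>0$. A set with at least two elements is distributional scrambled of type $i$ if every pair of its distinct points is. *)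

theory Defs
  imports "HOL-Analysis.Analysis"
begin

abbreviation full_space :: "'g set \<Rightarrow> 'a set \<Rightarrow> ('g \<Rightarrow> 'a) set" where
  "full_space \<Gamma> X \<equiv> PiE \<Gamma> (\<lambda>_. X)"

definition compatible_metric ::
  "'g set \<Rightarrow> 'a set \<Rightarrow> (('g \<Rightarrow> 'a) \<Rightarrow> ('g \<Rightarrow> 'a) \<Rightarrow> real) \<Rightarrow> bool" where
  "compatible_metric \<Gamma> X d \<longleftrightarrow>
     Metric_space (full_space \<Gamma> X) d \<and>
     Metric_space.mtopology (full_space \<Gamma> X) d = product_topology (\<lambda>_. discrete_topology X) \<Gamma>"

definition gshift :: "'g set \<Rightarrow> ('g \<Rightarrow> 'g) \<Rightarrow> ('g \<Rightarrow> 'a) \<Rightarrow> ('g \<Rightarrow> 'a)" where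
  "gshift \<Gamma> \<phi> x = (\<lambda>\<alpha>. if \<alpha> \<in> \<Gamma> then x (\<phi> \<alpha>) else undefined)"

definition non_quasi_periodic :: "('g \<Rightarrow> 'g) \<Rightarrow> 'g \<Rightarrow> bool" where
  "non_quasi_periodic \<phi> \<theta> \<longleftrightarrow> infinite {(\<phi> ^^ n) \<theta> | n. True}"

definition xi :: "('b \<Rightarrow> 'b) \<Rightarrow> ('b \<Rightarrow> 'b \<Rightarrow> real) \<Rightarrow> 'b \<Rightarrow> 'b \<Rightarrow> real \<Rightarrow> nat \<Rightarrow> nat" where
  "xi f d x y t n = card {i \<in> {0..<n}. d ((f ^^ i) x) ((f ^^ i) y) < t}"

definition Flow :: "('b \<Rightarrow> 'b) \<Rightarrow> ('b \<Rightarrow> 'b \<Rightarrow> real) \<Rightarrow> 'b \<Rightarrow> 'b \<Rightarrow> real \<Rightarrow> ereal" where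
  "Flow f d x y t = liminf (\<lambda>n. ereal (real (xi f d x y t n) / real n))"

definition Fup :: "('b \<Rightarrow> 'b) \<Rightarrow> ('b \<Rightarrow> 'b \<Rightarrow> real) \<Rightarrow> 'b \<Rightarrow> 'b \<Rightarrow> real \<Rightarrow> ereal" where
  "Fup f d x y t = limsup (\<lambda>n. ereal (real (xi f d x y t n) / real n))"

definition DS1_pair :: "('b \<Rightarrow> 'b) \<Rightarrow> ('b \<Rightarrow> 'b \<Rightarrow> real) \<Rightarrow> 'b \<Rightarrow> 'b \<Rightarrow> bool" where
  "DS1_pair f d x y \<longleftrightarrow> (\<exists>s>0. Flow f d x y s = 0) \<and> (\<forall>s>0. Fup f d x y s = 1)"

definition DS2_pair :: "('b \<Rightarrow> 'b) \<Rightarrow> ('b \<Rightarrow> 'b \<Rightarrow> real) \<Rightarrow> 'b \<Rightarrow> 'b \<Rightarrow> bool" where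
  "DS2_pair f d x y \<longleftrightarrow> (\<exists>s>0. Flow f d x y s < 1) \<and> (\<forall>s>0. Fup f d x y s = 1)"

definition DS1_set :: "('b \<Rightarrow> 'b) \<Rightarrow> ('b \<Rightarrow> 'b \<Rightarrow> real) \<Rightarrow> 'b set \<Rightarrow> bool" where
  "DS1_set f d D \<longleftrightarrow> (\<exists>x\<in>D. \<exists>y\<in>D. x \<noteq> y) \<and> (\<forall>x\<in>D. \<forall>y\<in>D. x \<noteq> y \<longrightarrow> DS1_pair f d x y)"

definition DS2_set :: "('b \<Rightarrow> 'b) \<Rightarrow> ('b \<Rightarrow> 'b \<Rightarrow> real) \<Rightarrow> 'b set \<Rightarrow> bool" where
  "DS2_set f d D \<longleftrightarrow> (\<exists>x\<in>D. \<exists>y\<in>D. x \<noteq> y) \<and> (\<forall>x\<in>D. \<forall>y\<in>D. x \<noteq> y \<longrightarrow> DS2_pair f d x y)"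

end

(* An ambient point x and its modification y^x differ only at finitely many positions, each of
   them non-quasi-periodic and hence visited at most once by a phi-orbit; so every coordinate of
   sigma^n x and sigma^n y^x agrees from some time on. As X^Gamma is compact and d induces the
   product topology, coordinatewise eventual agreement forces d(sigma^n x, sigma^n y^x) -> 0:
   x and y^x are asymptotic. For asymptotic pairs, being t/2-close for one pair eventually implies
   being t-close for the other, so F_{y^x y^z}(t/2) <= F_{xz}(t) and symmetrically, and the same
   for F*. All properties in the statement are stable under such a halving of t. *)

theory Submission
  imports Defs
begin

lemma limitin_product_topology_eventually_agree:
  assumes "limitin (product_topology T I) a l F" "\<And>n. b n \<in> topspace (product_topology T I)"
    and "\<And>i. i \<in> I \<Longrightarrow> eventually (\<lambda>n. a n i = b n i) F"
  shows "limitin (product_topology T I) b l F"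
proof -
  have "limitin (T i) (\<lambda>n. b n i) (l i) F" if "i \<in> I" for i
  proof (rule limitin_transform_eventually)
    show "eventually (\<lambda>n. a n i = b n i) F" using assms(3)[OF that] .
    show "limitin (T i) (\<lambda>n. a n i) (l i) F" using assms(1) that by (simp add: limitin_componentwise)
  qed
  then show ?thesis using assms(1,2) by (simp add: limitin_componentwise)
qed

lemma dist_tendsto_zero_if_coordinates_eventually_agree:
  fixes a b :: "nat \<Rightarrow> 'i \<Rightarrow> 'x"
  assumes "Metric_space M d" and compact: "compact_space (Metric_space.mtopology M d)"
    and top: "Metric_space.mtopology M d = product_topology T I"
    and a: "range a \<subseteq> M" and b: "range b \<subseteq> M"
    and agree: "\<And>i. i \<in> I \<Longrightarrow> eventually (\<lambda>n. a n i = b n i) sequentially"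
  shows "(\<lambda>n. d (a n) (b n)) \<longlonglongrightarrow> 0"
proof -
  interpret Metric_space M d by fact
  have "eventually (\<lambda>n. d (a n) (b n) < e) sequentially" if e: "e > 0" for e
  proof (rule ccontr)
    assume "\<not> eventually (\<lambda>n. d (a n) (b n) < e) sequentially"
    then have "infinite {n. \<not> d (a n) (b n) < e}"
      by (simp add: eventually_cofinite flip: cofinite_eq_sequentially)
    then obtain r :: "nat \<Rightarrow> nat" where r: "strict_mono r" "\<And>n. \<not> d (a (r n)) (b (r n)) < e"
      using infinite_enumerate by blast
    have "range (a \<circ> r) \<subseteq> M" using a by auto
    then obtain l s where l: "l \<in> M" and s: "strict_mono s"
      and lim_a: "limitin mtopology (a \<circ> r \<circ> s) l sequentially"
      using compact unfolding compact_space_sequentially by blast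
    have tp: "topspace (product_topology T I) = M"
      using top topspace_mtopology by metis
    have lim_b: "limitin mtopology (b \<circ> r \<circ> s) l sequentially"
      unfolding top
    proof (rule limitin_product_topology_eventually_agree[OF lim_a[unfolded top]])
      show "(b \<circ> r \<circ> s) n \<in> topspace (product_topology T I)" for n
        using b tp by auto
      show "eventually (\<lambda>n. (a \<circ> r \<circ> s) n i = (b \<circ> r \<circ> s) n i) sequentially" if "i \<in> I" for i
        using eventually_subseq[OF strict_mono_o[OF r(1) s] agree[OF that]] by simp
    qed
    have "eventually (\<lambda>n. d ((a \<circ> r \<circ> s) n) l < e/2 \<and> d ((b \<circ> r \<circ> s) n) l < e/2) sequentially"
      using lim_a lim_b e unfolding limitin_metric
      by (auto simp: eventually_conj_iff dest!: spec[of _ "e/2"] elim: eventually_mono)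
    then obtain n where n: "d (a (r (s n))) l < e/2" "d (b (r (s n))) l < e/2"
      unfolding eventually_sequentially by auto
    have "d (a (r (s n))) (b (r (s n))) \<le> d (a (r (s n))) l + d l (b (r (s n)))"
      using a b l by (intro triangle) auto
    then show False
      using n r(2)[of "s n"] commute[of l "b (r (s n))"] by linarith
  qed
  then show ?thesis
    using a b by (simp add: tendsto_iff range_subsetD)
qed

definition asymptotic :: "('b \<Rightarrow> 'b) \<Rightarrow> ('b \<Rightarrow> 'b \<Rightarrow> real) \<Rightarrow> 'b \<Rightarrow> 'b \<Rightarrow> bool" where
  "asymptotic f d p q \<longleftrightarrow> (\<lambda>n. d ((f ^^ n) p) ((f ^^ n) q)) \<longlonglongrightarrow> 0"

lemma xi_le: "xi f d p q t n \<le> n"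
proof -
  have "xi f d p q t n \<le> card {0..<n}" unfolding xi_def by (rule card_mono) auto
  then show ?thesis by simp
qed

lemma Fup_le_one: "Fup f d p q t \<le> 1"
proof -
  have "real (xi f d p q t n) / real n \<le> 1" for n
    using xi_le[of f d p q t n] by (cases "n = 0") (simp_all add: divide_le_eq_1)
  then show ?thesis unfolding Fup_def by (intro Limsup_bounded) simp
qed

lemma Flow_nonneg: "0 \<le> Flow f d p q t"
  unfolding Flow_def by (rule Liminf_bounded) simp

lemma Flow_eq_one_if_always_close:
  assumes "\<And>n. d ((f ^^ n) p) ((f ^^ n) q) < t"
  shows "Flow f d p q t = 1"
proof -
  have "xi f d p q t n = n" for n unfolding xi_def using assms by simp
  then have "1 \<le> Flow f d p q t"
    unfolding Flow_def by (intro Liminf_bounded eventually_sequentiallyI[of 1]) auto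
  moreover have "Flow f d p q t \<le> Fup f d p q t"
    unfolding Flow_def Fup_def by (rule Liminf_le_Limsup) simp
  ultimately show ?thesis using Fup_le_one[of f d p q t] by simp
qed

lemma Flow_Fup_le_if_xi_le:
  assumes "\<And>n. xi f d p q t n \<le> xi f d p' q' t' n + N"
  shows "Flow f d p q t \<le> Flow f d p' q' t'" and "Fup f d p q t \<le> Fup f d p' q' t'"
proof -
  let ?r = "\<lambda>p q t n. ereal (real (xi f d p q t n) / real n)"
  have le: "?r p q t n \<le> ereal (real N / real n) + ?r p' q' t' n" for n
    using assms[of n] by (simp add: divide_right_mono flip: add_divide_distrib)
  have to_zero: "(\<lambda>n. ereal (real N / real n)) \<longlonglongrightarrow> ereal 0"
    by (intro tendsto_ereal lim_const_over_n)
  have "Flow f d p q t \<le> liminf (\<lambda>n. ereal (real N / real n) + ?r p' q' t' n)"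
    unfolding Flow_def using le by (intro Liminf_mono always_eventually) auto
  also have "\<dots> = Flow f d p' q' t'"
    unfolding Flow_def by (subst ereal_liminf_lim_add[OF to_zero]) simp_all
  finally show "Flow f d p q t \<le> Flow f d p' q' t'" .
  have "Fup f d p q t \<le> limsup (\<lambda>n. ereal (real N / real n) + ?r p' q' t' n)"
    unfolding Fup_def using le by (intro Limsup_mono always_eventually) auto
  also have "\<dots> = Fup f d p' q' t'"
    unfolding Fup_def by (subst ereal_limsup_lim_add[OF to_zero]) simp_all
  finally show "Fup f d p q t \<le> Fup f d p' q' t'" .
qed

locale metric_dynamical_system = Metric_space M d for M :: "'b set" and d +
  fixes f :: "'b \<Rightarrow> 'b"
  assumes map_closed: "x \<in> M \<Longrightarrow> f x \<in> M"
begin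

lemma funpow_closed: "x \<in> M \<Longrightarrow> (f ^^ n) x \<in> M"
  by (induction n) (simp_all add: map_closed)

lemma asymptotic_sym: "asymptotic f d p q \<longleftrightarrow> asymptotic f d q p"
  unfolding asymptotic_def by (simp add: commute)

lemma xi_le_xi_if_asymptotic:
  assumes "p \<in> M" "q \<in> M" "p' \<in> M" "q' \<in> M"
    and "asymptotic f d p p'" "asymptotic f d q q'" and "e > 0"
  obtains N where "\<And>n. xi f d p q t n \<le> xi f d p' q' (t + e) n + N"
proof -
  have "eventually (\<lambda>n. d ((f ^^ n) p) ((f ^^ n) p') < e/2 \<and> d ((f ^^ n) q) ((f ^^ n) q') < e/2) sequentially"
    using assms(5,6) \<open>e > 0\<close> unfolding asymptotic_def
    by (auto intro!: eventually_conj order_tendstoD)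
  then obtain N where N: "\<And>n. n \<ge> N \<Longrightarrow> d ((f ^^ n) p) ((f ^^ n) p') < e/2 \<and> d ((f ^^ n) q) ((f ^^ n) q') < e/2"
    unfolding eventually_sequentially by blast
  have close: "d ((f ^^ n) p') ((f ^^ n) q') < t + e" if "n \<ge> N" "d ((f ^^ n) p) ((f ^^ n) q) < t" for n
  proof -
    have orbits: "(f ^^ n) p \<in> M" "(f ^^ n) q \<in> M" "(f ^^ n) p' \<in> M" "(f ^^ n) q' \<in> M"
      using assms(1-4) by (simp_all add: funpow_closed)
    have "d ((f ^^ n) p') ((f ^^ n) q') \<le> d ((f ^^ n) p') ((f ^^ n) p) + d ((f ^^ n) p) ((f ^^ n) q')"
      using orbits by (intro triangle)
    moreover have "d ((f ^^ n) p) ((f ^^ n) q') \<le> d ((f ^^ n) p) ((f ^^ n) q) + d ((f ^^ n) q) ((f ^^ n) q')"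
      using orbits by (intro triangle)
    ultimately show ?thesis using N[OF that(1)] that(2) commute[of "(f ^^ n) p'" "(f ^^ n) p"] by linarith
  qed
  have "xi f d p q t n \<le> xi f d p' q' (t + e) n + N" for n
  proof -
    have "{i \<in> {0..<n}. d ((f ^^ i) p) ((f ^^ i) q) < t} \<subseteq>
          {i \<in> {0..<n}. d ((f ^^ i) p') ((f ^^ i) q') < t + e} \<union> {0..<N}"
      using close by force
    then have "xi f d p q t n \<le> card ({i \<in> {0..<n}. d ((f ^^ i) p') ((f ^^ i) q') < t + e} \<union> {0..<N})"
      unfolding xi_def by (intro card_mono) auto
    also have "\<dots> \<le> xi f d p' q' (t + e) n + N"
      unfolding xi_def by (rule order_trans[OF card_Un_le]) simp
    finally show ?thesis .
  qed
  then show thesis by (rule that)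
qed

lemma Flow_Fup_le_if_asymptotic:
  assumes "p \<in> M" "q \<in> M" "p' \<in> M" "q' \<in> M"
    and "asymptotic f d p p'" "asymptotic f d q q'" and "t > 0"
  shows "Flow f d p q (t/2) \<le> Flow f d p' q' t" and "Fup f d p q (t/2) \<le> Fup f d p' q' t"
proof -
  obtain N where "\<And>n. xi f d p q (t/2) n \<le> xi f d p' q' t n + N"
    using xi_le_xi_if_asymptotic[OF assms(1-6), of "t/2" "t/2"] \<open>t > 0\<close> by auto
  then show "Flow f d p q (t/2) \<le> Flow f d p' q' t" and "Fup f d p q (t/2) \<le> Fup f d p' q' t"
    by (rule Flow_Fup_le_if_xi_le)+
qed

end

lemma ex_pos_transfer_half:
  fixes F G :: "'i \<Rightarrow> real \<Rightarrow> ereal"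
  assumes "\<And>i t. i \<in> P \<Longrightarrow> t > 0 \<Longrightarrow> G i (t/2) \<le> F i t" and "\<And>i t. 0 \<le> G i t"
    and "\<And>a b. 0 \<le> a \<Longrightarrow> a \<le> b \<Longrightarrow> R b \<Longrightarrow> R a"
    and "\<exists>t>0. \<forall>i\<in>P. R (F i t)"
  shows "\<exists>t>0. \<forall>i\<in>P. R (G i t)"
  using assms by (meson half_gt_zero)

lemma nontrivial_pairwise_image_iff:
  assumes "\<And>x z. x \<in> D \<Longrightarrow> z \<in> D \<Longrightarrow> P x z \<longleftrightarrow> P (g x) (g z)"
    and "\<And>x z. x \<in> D \<Longrightarrow> z \<in> D \<Longrightarrow> x \<noteq> z \<Longrightarrow> P x z \<Longrightarrow> g x \<noteq> g z"
  shows "((\<exists>x\<in>D. \<exists>z\<in>D. x \<noteq> z) \<and> (\<forall>x\<in>D. \<forall>z\<in>D. x \<noteq> z \<longrightarrow> P x z)) \<longleftrightarrow>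
    inj_on g D \<and> (\<exists>x\<in>g ` D. \<exists>z\<in>g ` D. x \<noteq> z) \<and> (\<forall>x\<in>g ` D. \<forall>z\<in>g ` D. x \<noteq> z \<longrightarrow> P x z)"
proof
  assume L: "(\<exists>x\<in>D. \<exists>z\<in>D. x \<noteq> z) \<and> (\<forall>x\<in>D. \<forall>z\<in>D. x \<noteq> z \<longrightarrow> P x z)"
  then have "inj_on g D" using assms(2) by (meson inj_onI)
  then show "inj_on g D \<and> (\<exists>x\<in>g ` D. \<exists>z\<in>g ` D. x \<noteq> z) \<and> (\<forall>x\<in>g ` D. \<forall>z\<in>g ` D. x \<noteq> z \<longrightarrow> P x z)"
    using L assms(1) by (auto simp: inj_on_eq_iff)
next
  assume "inj_on g D \<and> (\<exists>x\<in>g ` D. \<exists>z\<in>g ` D. x \<noteq> z) \<and> (\<forall>x\<in>g ` D. \<forall>z\<in>g ` D. x \<noteq> z \<longrightarrow> P x z)"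
  then show "(\<exists>x\<in>D. \<exists>z\<in>D. x \<noteq> z) \<and> (\<forall>x\<in>D. \<forall>z\<in>D. x \<noteq> z \<longrightarrow> P x z)"
    using assms(1) by (auto simp: inj_on_eq_iff) blast
qed

locale asymptotic_modification = metric_dynamical_system M d f for M d f +
  fixes y
  assumes modification_closed: "x \<in> M \<Longrightarrow> y x \<in> M"
    and asymptotic_to_modification: "x \<in> M \<Longrightarrow> asymptotic f d x (y x)"
begin

lemma Flow_Fup_modification_le:
  assumes "x \<in> M" "z \<in> M" "t > 0"
  shows "Flow f d x z (t/2) \<le> Flow f d (y x) (y z) t"
    and "Flow f d (y x) (y z) (t/2) \<le> Flow f d x z t"
    and "Fup f d x z (t/2) \<le> Fup f d (y x) (y z) t"
    and "Fup f d (y x) (y z) (t/2) \<le> Fup f d x z t"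
proof -
  have yM: "y x \<in> M" "y z \<in> M" using assms modification_closed by simp_all
  have "asymptotic f d x (y x)" "asymptotic f d z (y z)"
    using assms asymptotic_to_modification by simp_all
  moreover have "asymptotic f d (y x) x" "asymptotic f d (y z) z"
    using calculation asymptotic_sym by simp_all
  ultimately show "Flow f d x z (t/2) \<le> Flow f d (y x) (y z) t"
    and "Flow f d (y x) (y z) (t/2) \<le> Flow f d x z t"
    and "Fup f d x z (t/2) \<le> Fup f d (y x) (y z) t"
    and "Fup f d (y x) (y z) (t/2) \<le> Fup f d x z t"
    using Flow_Fup_le_if_asymptotic assms yM by blast+
qed

lemma Fup_eq_one_iff_modification:
  assumes "x \<in> M" "z \<in> M"
  shows "(\<forall>t>0. Fup f d x z t = 1) \<longleftrightarrow> (\<forall>t>0. Fup f d (y x) (y z) t = 1)"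
  using Flow_Fup_modification_le(3,4)[OF assms] Fup_le_one
  by (metis antisym half_gt_zero)

lemma ex_uniform_Flow_iff_modification:
  assumes R_mono: "\<And>a b. 0 \<le> a \<Longrightarrow> a \<le> b \<Longrightarrow> R b \<Longrightarrow> R a" and "P \<subseteq> M \<times> M"
  shows "(\<exists>t>0. \<forall>(x, z)\<in>P. R (Flow f d x z t)) \<longleftrightarrow>
    (\<exists>t>0. \<forall>(x, z)\<in>P. R (Flow f d (y x) (y z) t))"
proof -
  let ?F = "\<lambda>(x, z). Flow f d x z" and ?G = "\<lambda>(x, z). Flow f d (y x) (y z)"
  have "(\<exists>t>0. \<forall>i\<in>P. R (?F i t)) \<longleftrightarrow> (\<exists>t>0. \<forall>i\<in>P. R (?G i t))"
  proof
    show "\<exists>t>0. \<forall>i\<in>P. R (?G i t)" if "\<exists>t>0. \<forall>i\<in>P. R (?F i t)"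
      using that assms Flow_Fup_modification_le(2) Flow_nonneg
      by (intro ex_pos_transfer_half[of P ?G ?F R]) auto
    show "\<exists>t>0. \<forall>i\<in>P. R (?F i t)" if "\<exists>t>0. \<forall>i\<in>P. R (?G i t)"
      using that assms Flow_Fup_modification_le(1) Flow_nonneg
      by (intro ex_pos_transfer_half[of P ?F ?G R]) auto
  qed
  then show ?thesis by (simp add: case_prod_beta')
qed

lemma modification_neq_if_Flow_less_one:
  assumes "x \<in> M" "z \<in> M" "t > 0" "Flow f d x z t < 1"
  shows "y x \<noteq> y z"
proof
  assume "y x = y z"
  then have "Flow f d (y x) (y z) (t/2) = 1"
    using assms modification_closed funpow_closed by (intro Flow_eq_one_if_always_close) simp
  then show False using Flow_Fup_modification_le(2)[OF assms(1-3)] assms(4) by simp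
qed

lemma ex_Flow_pair_iff_modification:
  assumes "\<And>a b. 0 \<le> a \<Longrightarrow> a \<le> b \<Longrightarrow> R b \<Longrightarrow> R a" "x \<in> M" "z \<in> M"
  shows "(\<exists>t>0. R (Flow f d x z t)) \<longleftrightarrow> (\<exists>t>0. R (Flow f d (y x) (y z) t))"
  using ex_uniform_Flow_iff_modification[of R "{(x, z)}"] assms by simp

lemma ex_Flow_distinct_pairs_iff_modification:
  assumes "\<And>a b. 0 \<le> a \<Longrightarrow> a \<le> b \<Longrightarrow> R b \<Longrightarrow> R a" "D \<subseteq> M"
  shows "(\<exists>t>0. \<forall>x\<in>D. \<forall>z\<in>D. x \<noteq> z \<longrightarrow> R (Flow f d x z t)) \<longleftrightarrow>
    (\<exists>t>0. \<forall>x\<in>D. \<forall>z\<in>D. x \<noteq> z \<longrightarrow> R (Flow f d (y x) (y z) t))"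
proof -
  let ?P = "{(x, z). x \<in> D \<and> z \<in> D \<and> x \<noteq> z}"
  have "(\<exists>t>0. \<forall>(x, z)\<in>?P. R (Flow f d x z t)) \<longleftrightarrow>
      (\<exists>t>0. \<forall>(x, z)\<in>?P. R (Flow f d (y x) (y z) t))"
  proof (rule ex_uniform_Flow_iff_modification)
    show "\<And>a b. 0 \<le> a \<Longrightarrow> a \<le> b \<Longrightarrow> R b \<Longrightarrow> R a" by (fact assms(1))
    show "?P \<subseteq> M \<times> M" using assms(2) by auto
  qed
  then show ?thesis by (simp add: Ball_def imp_conjL)
qed

lemma DS1_set_iff_modification:
  assumes "D \<subseteq> M"
  shows "DS1_set f d D \<longleftrightarrow> inj_on y D \<and> DS1_set f d (y ` D)"
  unfolding DS1_set_def
proof (rule nontrivial_pairwise_image_iff)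
  fix x z assume xz: "x \<in> D" "z \<in> D"
  show "DS1_pair f d x z \<longleftrightarrow> DS1_pair f d (y x) (y z)"
    unfolding DS1_pair_def using xz assms Fup_eq_one_iff_modification
      ex_Flow_pair_iff_modification[of "\<lambda>a. a = 0"] by (auto simp: subset_iff)
  show "y x \<noteq> y z" if "x \<noteq> z" "DS1_pair f d x z"
    using that xz assms modification_neq_if_Flow_less_one unfolding DS1_pair_def by force
qed

lemma DS2_set_iff_modification:
  assumes "D \<subseteq> M"
  shows "DS2_set f d D \<longleftrightarrow> inj_on y D \<and> DS2_set f d (y ` D)"
  unfolding DS2_set_def
proof (rule nontrivial_pairwise_image_iff)
  fix x z assume xz: "x \<in> D" "z \<in> D"
  show "DS2_pair f d x z \<longleftrightarrow> DS2_pair f d (y x) (y z)"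
    unfolding DS2_pair_def using xz assms Fup_eq_one_iff_modification
      ex_Flow_pair_iff_modification[of "\<lambda>a. a < 1"] by (auto simp: subset_iff)
  show "y x \<noteq> y z" if "x \<noteq> z" "DS2_pair f d x z"
    using that xz assms modification_neq_if_Flow_less_one unfolding DS2_pair_def by force
qed

end

lemma funpow_in_invariant_set: "\<phi> ` \<Gamma> \<subseteq> \<Gamma> \<Longrightarrow> \<alpha> \<in> \<Gamma> \<Longrightarrow> (\<phi> ^^ n) \<alpha> \<in> \<Gamma>"
  by (induction n) auto

lemma gshift_funpow_apply:
  assumes "\<phi> ` \<Gamma> \<subseteq> \<Gamma>" "\<alpha> \<in> \<Gamma>"
  shows "(gshift \<Gamma> \<phi> ^^ n) w \<alpha> = w ((\<phi> ^^ n) \<alpha>)"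
  using assms(2)
proof (induction n arbitrary: \<alpha>)
  case (Suc n)
  have "(gshift \<Gamma> \<phi> ^^ Suc n) w \<alpha> = (gshift \<Gamma> \<phi> ^^ n) w (\<phi> \<alpha>)"
    using Suc.prems by (simp add: gshift_def)
  also have "\<dots> = w ((\<phi> ^^ n) (\<phi> \<alpha>))"
    using Suc assms(1) by auto
  finally show ?case by (simp only: funpow_Suc_right comp_apply)
qed simp

lemma gshift_in_full_space:
  "\<phi> ` \<Gamma> \<subseteq> \<Gamma> \<Longrightarrow> w \<in> full_space \<Gamma> X \<Longrightarrow> gshift \<Gamma> \<phi> w \<in> full_space \<Gamma> X"
  unfolding gshift_def by (auto simp: PiE_def Pi_def extensional_def)

lemma not_non_quasi_periodic_if_periodic:
  assumes "(\<phi> ^^ k) \<theta> = \<theta>" "k > 0"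
  shows "\<not> non_quasi_periodic \<phi> \<theta>"
proof -
  have "{(\<phi> ^^ n) \<theta> | n. True} \<subseteq> (\<lambda>j. (\<phi> ^^ j) \<theta>) ` {..<k}"
  proof
    fix w assume "w \<in> {(\<phi> ^^ n) \<theta> | n. True}"
    then obtain n where "w = (\<phi> ^^ (n mod k)) \<theta>"
      using funpow_mod_eq[OF assms(1)] by auto
    then show "w \<in> (\<lambda>j. (\<phi> ^^ j) \<theta>) ` {..<k}" using assms(2) by simp
  qed
  then show ?thesis
    unfolding non_quasi_periodic_def using finite_subset by blast
qed

lemma non_quasi_periodic_visited_once:
  assumes "non_quasi_periodic \<phi> \<theta>" "(\<phi> ^^ n) \<alpha> = \<theta>" "(\<phi> ^^ m) \<alpha> = \<theta>"
  shows "n = m"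
proof -
  have "\<not> i < j" if "(\<phi> ^^ i) \<alpha> = \<theta>" "(\<phi> ^^ j) \<alpha> = \<theta>" for i j
  proof
    assume "i < j"
    have "(\<phi> ^^ (j - i)) \<theta> = (\<phi> ^^ (j - i + i)) \<alpha>"
      using that(1) by (simp add: funpow_add)
    then have "(\<phi> ^^ (j - i)) \<theta> = \<theta>" using \<open>i < j\<close> that(2) by simp
    with \<open>i < j\<close> show False
      using not_non_quasi_periodic_if_periodic assms(1) by (metis zero_less_diff)
  qed
  from this[OF assms(2,3)] this[OF assms(3,2)] show ?thesis by simp
qed

lemma finite_visits_non_quasi_periodic:
  assumes "finite S" "\<And>\<theta>. \<theta> \<in> S \<Longrightarrow> non_quasi_periodic \<phi> \<theta>"
  shows "finite {n. (\<phi> ^^ n) \<alpha> \<in> S}"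
proof -
  have "{n. (\<phi> ^^ n) \<alpha> = \<theta>} \<subseteq> {LEAST n. (\<phi> ^^ n) \<alpha> = \<theta>}" if "\<theta> \<in> S" for \<theta>
  proof
    fix n assume "n \<in> {n. (\<phi> ^^ n) \<alpha> = \<theta>}"
    then have "(\<phi> ^^ n) \<alpha> = \<theta>" "(\<phi> ^^ (LEAST n. (\<phi> ^^ n) \<alpha> = \<theta>)) \<alpha> = \<theta>"
      by (auto intro: LeastI)
    then show "n \<in> {LEAST n. (\<phi> ^^ n) \<alpha> = \<theta>}"
      using non_quasi_periodic_visited_once[OF assms(2)[OF that]] by simp
  qed
  then have "finite {n. (\<phi> ^^ n) \<alpha> = \<theta>}" if "\<theta> \<in> S" for \<theta>
    using that finite_subset by blast
  moreover have "{n. (\<phi> ^^ n) \<alpha> \<in> S} = (\<Union>\<theta>\<in>S. {n. (\<phi> ^^ n) \<alpha> = \<theta>})" by auto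
  ultimately show ?thesis using assms(1) by simp
qed

lemma asymptotic_gshift_if_finite_non_quasi_periodic_difference:
  assumes "compatible_metric \<Gamma> X d" "finite X" "\<phi> ` \<Gamma> \<subseteq> \<Gamma>"
    and "x \<in> full_space \<Gamma> X" "x' \<in> full_space \<Gamma> X"
    and "finite {\<alpha> \<in> \<Gamma>. x \<alpha> \<noteq> x' \<alpha>}"
    and "\<And>\<alpha>. \<alpha> \<in> \<Gamma> \<Longrightarrow> x \<alpha> \<noteq> x' \<alpha> \<Longrightarrow> non_quasi_periodic \<phi> \<alpha>"
  shows "asymptotic (gshift \<Gamma> \<phi>) d x x'"
proof -
  have ms: "Metric_space (full_space \<Gamma> X) d"
    and top: "Metric_space.mtopology (full_space \<Gamma> X) d = product_topology (\<lambda>_. discrete_topology X) \<Gamma>"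
    using assms(1) unfolding compatible_metric_def by simp_all
  have compact: "compact_space (Metric_space.mtopology (full_space \<Gamma> X) d)"
    unfolding top compact_space_product_topology using assms(2) by (simp add: compact_space_discrete_topology)
  have "(gshift \<Gamma> \<phi> ^^ n) w \<in> full_space \<Gamma> X" if "w \<in> full_space \<Gamma> X" for w n
    by (induction n) (simp_all add: that gshift_in_full_space[OF assms(3)])
  then have orbits: "range (\<lambda>n. (gshift \<Gamma> \<phi> ^^ n) x) \<subseteq> full_space \<Gamma> X"
      "range (\<lambda>n. (gshift \<Gamma> \<phi> ^^ n) x') \<subseteq> full_space \<Gamma> X"
    using assms(4,5) by auto
  have "eventually (\<lambda>n. (gshift \<Gamma> \<phi> ^^ n) x \<alpha> = (gshift \<Gamma> \<phi> ^^ n) x' \<alpha>) sequentially"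
    if "\<alpha> \<in> \<Gamma>" for \<alpha>
  proof -
    have "finite {n. (\<phi> ^^ n) \<alpha> \<in> {\<alpha> \<in> \<Gamma>. x \<alpha> \<noteq> x' \<alpha>}}"
      using assms(6,7) by (intro finite_visits_non_quasi_periodic) auto
    then show ?thesis
      using assms(3) that
      by (simp add: gshift_funpow_apply funpow_in_invariant_set eventually_cofinite
          flip: cofinite_eq_sequentially)
  qed
  then show ?thesis unfolding asymptotic_def
    by (rule dist_tendsto_zero_if_coordinates_eventually_agree[OF ms compact top orbits])
qed

theorem corollary4p3:
  fixes X :: "'a set" and \<Gamma> :: "'g set" and \<phi> :: "'g \<Rightarrow> 'g"
    and d :: "('g \<Rightarrow> 'a) \<Rightarrow> ('g \<Rightarrow> 'a) \<Rightarrow> real"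
    and y :: "('g \<Rightarrow> 'a) \<Rightarrow> ('g \<Rightarrow> 'a)"
    and D :: "('g \<Rightarrow> 'a) set" and u v :: "'g \<Rightarrow> 'a"
  assumes X_fin: "finite X" and X_two: "card X \<ge> 2"
    and \<Gamma>_ne: "\<Gamma> \<noteq> {}" and \<Gamma>_count: "countable \<Gamma>"
    and \<phi>_map: "\<phi> ` \<Gamma> \<subseteq> \<Gamma>"
    and d_comp: "compatible_metric \<Gamma> X d"
    and y_in: "\<And>x. x \<in> full_space \<Gamma> X \<Longrightarrow> y x \<in> full_space \<Gamma> X"
    and y_fin: "\<And>x. x \<in> full_space \<Gamma> X \<Longrightarrow> finite {\<alpha> \<in> \<Gamma>. x \<alpha> \<noteq> y x \<alpha>}"
    and y_nqp: "\<And>x \<alpha>. x \<in> full_space \<Gamma> X \<Longrightarrow> \<alpha> \<in> \<Gamma> \<Longrightarrow> x \<alpha> \<noteq> y x \<alpha> \<Longrightarrow> non_quasi_periodic \<phi> \<alpha>"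
    and D_sub: "D \<subseteq> full_space \<Gamma> X"
    and u_in: "u \<in> full_space \<Gamma> X" and v_in: "v \<in> full_space \<Gamma> X"
  shows "((\<forall>t>0. Fup (gshift \<Gamma> \<phi>) d u v t = 1) \<longleftrightarrow> (\<forall>t>0. Fup (gshift \<Gamma> \<phi>) d (y u) (y v) t = 1))
    \<and> ((\<exists>t>0. \<forall>x\<in>D. \<forall>z\<in>D. x \<noteq> z \<longrightarrow> Flow (gshift \<Gamma> \<phi>) d x z t = 0) \<longleftrightarrow>
       (\<exists>t>0. \<forall>x\<in>D. \<forall>z\<in>D. x \<noteq> z \<longrightarrow> Flow (gshift \<Gamma> \<phi>) d (y x) (y z) t = 0))
    \<and> ((\<exists>t>0. \<forall>x\<in>D. \<forall>z\<in>D. x \<noteq> z \<longrightarrow> Flow (gshift \<Gamma> \<phi>) d x z t < 1) \<longleftrightarrow>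
       (\<exists>t>0. \<forall>x\<in>D. \<forall>z\<in>D. x \<noteq> z \<longrightarrow> Flow (gshift \<Gamma> \<phi>) d (y x) (y z) t < 1))
    \<and> (DS1_set (gshift \<Gamma> \<phi>) d D \<longleftrightarrow> inj_on y D \<and> DS1_set (gshift \<Gamma> \<phi>) d (y ` D))
    \<and> (DS2_set (gshift \<Gamma> \<phi>) d D \<longleftrightarrow> inj_on y D \<and> DS2_set (gshift \<Gamma> \<phi>) d (y ` D))"
proof -
  have "Metric_space (full_space \<Gamma> X) d"
    using d_comp unfolding compatible_metric_def by simp
  then interpret metric_dynamical_system "full_space \<Gamma> X" d "gshift \<Gamma> \<phi>"
    using gshift_in_full_space[OF \<phi>_map, of _ X]
    by (simp add: metric_dynamical_system_def metric_dynamical_system_axioms_def)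
  interpret asymptotic_modification "full_space \<Gamma> X" d "gshift \<Gamma> \<phi>" y
  proof
    fix x assume x: "x \<in> full_space \<Gamma> X"
    then show "y x \<in> full_space \<Gamma> X" by (rule y_in)
    show "asymptotic (gshift \<Gamma> \<phi>) d x (y x)"
      using x y_in y_fin y_nqp
      by (intro asymptotic_gshift_if_finite_non_quasi_periodic_difference[OF d_comp X_fin \<phi>_map])
  qed
  show ?thesis
    using Fup_eq_one_iff_modification[OF u_in v_in] D_sub
      ex_Flow_distinct_pairs_iff_modification[of "\<lambda>a. a = 0" D]
      ex_Flow_distinct_pairs_iff_modification[of "\<lambda>a. a < 1" D]
      DS1_set_iff_modification[OF D_sub] DS2_set_iff_modification[OF D_sub]
    by auto
qed

end
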